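(* Let $\Gamma$ be the Coxeter graph of $\mathbb L$ and let $J$ be a set of its vertices spanning an elliptic subgraph $\Gamma_J$ whose connected components have types $A_1$, $D_{2n}$ ($n\ge 2$), $E_7$, $E_8$, and let $\mathbb L^J$ be the orthogonal complement in $\mathbb L$ of the sublattice $\mathbb L_J$ spanned by $J$. Assume that the lattice $\mathbb L$ is achiral, and a $P$-direct $\mathbb Z/3$-reversing $f\in \operatorname{Aut} (P)$ is induced by a symmetry of the graph $\Gamma$ which preserves $\Gamma_J$ invariant. Then $\mathbb L^J$ is also achiral.
   Context: $\mathbb L$ is an even lattice of signature $(n,1)$ whose discriminant group splits as $\operatorname{discr}_2\mathbb L+\operatorname{discr}_3\mathbb L$ with $\operatorname{discr}_2$ of period 2 and $\operatorname{discr}_3\mathbb L=\mathbb Z/3$. Roots: 2-roots $v$ ($v^2=2$) and 6-roots ($v^2=6$, $v\cdot\mathbb L\subset 3\mathbb Z$); their reflections generate a group $W$ acting on $\Lambda=\Upsilon/\mathbb R^*$ and $\Lambda^\#=\Upsilon/\mathbb R_+$, where $\Upsilon=\{p\in\mathbb L\otimes\mathbb R: p^2<0\}$; cells are the fundamental chambers of $W$. For a cell $P\subset\Lambda$ with preimage $P^\#\cup(-P^\#)$ in $\Lambda^\#$, $\operatorname{Aut}(P)$ is its stabilizer in $\operatorname{Aut}(\mathbb L)$; $g\in\operatorname{Aut}(P)$ is $P$-direct if it preserves $P^\#$ (rather than swapping $P^\#$ and $-P^\#$); $g$ is $\mathbb Z/3$-reversing if it acts as $-\operatorname{id}$ on $\operatorname{discr}_3\mathbb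 L$. $\mathbb L$ is achiral if it has an automorphism that is $\mathbb Z/3$-reversing and $P$-direct for some cell $P$, chiral otherwise. The Coxeter graph $\Gamma$ has as vertices the basis $\Phi^b$ of roots defining the walls of $P^\#$ (edges weighted by $4(vw)^2/(v^2w^2)$). Under the hypotheses, $\mathbb L^J$ is again hyperbolic with $\operatorname{discr}_3=\mathbb Z/3$ and 2-part of period 2. *)

theory Defs
  imports "HOL-Analysis.Analysis"
begin

text \<open>The ambient lattice L is the standard lattice Z^n inside real^'n, with the
bilinear form given by a (symmetric, integral) Gram matrix G.  Sublattices
(such as the orthogonal complement of L_J) are subsets M of Z^n equipped with
the restricted form; all notions below are defined relative to such an M.\<close>

definition bform :: "real^'n^'n \<Rightarrow> real^'n \<Rightarrow> real^'n \<Rightarrow> real" where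
  "bform G x y = x \<bullet> (G *v y)"

definition Zn :: "(real^'n) set" where
  "Zn = {x. \<forall>i. x $ i \<in> \<int>}"

definition integral_symmetric :: "real^'n^'n \<Rightarrow> bool" where
  "integral_symmetric G \<longleftrightarrow> transpose G = G \<and> (\<forall>i j. G $ i $ j \<in> \<int>)"

definition even_lattice :: "real^'n^'n \<Rightarrow> (real^'n) set \<Rightarrow> bool" where
  "even_lattice G M \<longleftrightarrow> (\<forall>x\<in>M. bform G x x / 2 \<in> \<int>)"

text \<open>Hyperbolic (signature (n,1)) on the real span of M: there is a vector of negative
square whose orthogonal complement (in span M) is positive definite.\<close>
definition hyperbolic :: "real^'n^'n \<Rightarrow> (real^'n) set \<Rightarrow> bool" where
  "hyperbolic G M \<longleftrightarrow> (\<exists>p\<in>span M. bform G p p < 0 \<and>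
      (\<forall>q\<in>span M. bform G p q = 0 \<longrightarrow> q \<noteq> 0 \<longrightarrow> bform G q q > 0))"

definition dual_lattice :: "real^'n^'n \<Rightarrow> (real^'n) set \<Rightarrow> (real^'n) set" where
  "dual_lattice G M = {x\<in>span M. \<forall>m\<in>M. bform G x m \<in> \<int>}"

text \<open>p-primary part of discr M = dual/M, as a set of representatives in the dual.\<close>
definition discr_part :: "real^'n^'n \<Rightarrow> (real^'n) set \<Rightarrow> nat \<Rightarrow> (real^'n) set" where
  "discr_part G M p = {x\<in>dual_lattice G M. \<exists>k::nat. (real p ^ k) *\<^sub>R x \<in> M}"

definition discr_class :: "(real^'n) set \<Rightarrow> real^'n \<Rightarrow> (real^'n) set" where
  "discr_class M x = {y. y - x \<in> M}"

text \<open>discr = discr_2 + discr_3, discr_2 of period 2, discr_3 = Z/3 (cyclic of order 3,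
i.e. exactly three classes).\<close>
definition discr_condition :: "real^'n^'n \<Rightarrow> (real^'n) set \<Rightarrow> bool" where
  "discr_condition G M \<longleftrightarrow>
     (\<forall>x\<in>dual_lattice G M. \<exists>y\<in>discr_part G M 2. \<exists>z\<in>discr_part G M 3. x = y + z) \<and>
     (\<forall>x\<in>discr_part G M 2. 2 *\<^sub>R x \<in> M) \<and>
     card (discr_class M ` discr_part G M 3) = 3"

definition roots :: "real^'n^'n \<Rightarrow> (real^'n) set \<Rightarrow> (real^'n) set" where
  "roots G M = {v\<in>M. bform G v v = 2 \<or>
       (bform G v v = 6 \<and> (\<forall>m\<in>M. bform G v m / 3 \<in> \<int>))}"

definition Upsilon :: "real^'n^'n \<Rightarrow> (real^'n) set \<Rightarrow> (real^'n) set" where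
  "Upsilon G M = {p\<in>span M. bform G p p < 0}"

definition mirrors :: "real^'n^'n \<Rightarrow> (real^'n) set \<Rightarrow> (real^'n) set" where
  "mirrors G M = {p\<in>span M. \<exists>v\<in>roots G M. bform G p v = 0}"

text \<open>A chamber is (the open cone over) P^#: a connected component of Upsilon minus all
mirrors.  The cell P corresponds to the pair {C, -C}.\<close>
definition chamber :: "real^'n^'n \<Rightarrow> (real^'n) set \<Rightarrow> (real^'n) set \<Rightarrow> bool" where
  "chamber G M C \<longleftrightarrow> (\<exists>p \<in> Upsilon G M - mirrors G M.
      C = connected_component_set (Upsilon G M - mirrors G M) p)"

text \<open>Phi^b: the roots defining the walls of P^# (normalised to point inside).\<close>
definition wall_roots :: "real^'n^'n \<Rightarrow> (real^'n) set \<Rightarrow> (real^'n) set \<Rightarrow> (real^'n) set" where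
  "wall_roots G M C = {v\<in>roots G M. (\<forall>p\<in>C. bform G p v > 0) \<and>
      (\<exists>p\<in>Upsilon G M. bform G p v = 0 \<and>
         (\<exists>e>0. \<forall>q\<in>span M. dist q p < e \<and> bform G q v > 0 \<longrightarrow> q \<in> C))}"

definition lattice_aut :: "real^'n^'n \<Rightarrow> (real^'n) set \<Rightarrow> (real^'n \<Rightarrow> real^'n) \<Rightarrow> bool" where
  "lattice_aut G M g \<longleftrightarrow> linear g \<and> g ` M = M \<and>
      (\<forall>x\<in>M. \<forall>y\<in>M. bform G (g x) (g y) = bform G x y)"

text \<open>g acts as -id on discr_3.\<close>
definition Z3_reversing :: "real^'n^'n \<Rightarrow> (real^'n) set \<Rightarrow> (real^'n \<Rightarrow> real^'n) \<Rightarrow> bool" where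
  "Z3_reversing G M g \<longleftrightarrow> (\<forall>x\<in>discr_part G M 3. g x + x \<in> M)"

text \<open>g in Aut(P) (P = {C,-C}) is P-direct iff it preserves C.\<close>
definition P_direct :: "(real^'n) set \<Rightarrow> (real^'n \<Rightarrow> real^'n) \<Rightarrow> bool" where
  "P_direct C g \<longleftrightarrow> g ` C = C"

definition achiral :: "real^'n^'n \<Rightarrow> (real^'n) set \<Rightarrow> bool" where
  "achiral G M \<longleftrightarrow> (\<exists>C g. chamber G M C \<and> lattice_aut G M g \<and> P_direct C g \<and> Z3_reversing G M g)"

definition cox_weight :: "real^'n^'n \<Rightarrow> real^'n \<Rightarrow> real^'n \<Rightarrow> real" where
  "cox_weight G v w = 4 * (bform G v w)^2 / (bform G v v * bform G w w)"

definition elliptic :: "real^'n^'n \<Rightarrow> (real^'n) set \<Rightarrow> bool" where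
  "elliptic G J \<longleftrightarrow> finite J \<and>
     (\<forall>c::real^'n \<Rightarrow> real. (\<exists>v\<in>J. c v \<noteq> 0) \<longrightarrow>
        bform G (\<Sum>v\<in>J. c v *\<^sub>R v) (\<Sum>v\<in>J. c v *\<^sub>R v) > 0)"

definition cox_adj :: "real^'n^'n \<Rightarrow> (real^'n) set \<Rightarrow> real^'n \<Rightarrow> real^'n \<Rightarrow> bool" where
  "cox_adj G J v w \<longleftrightarrow> v \<in> J \<and> w \<in> J \<and> v \<noteq> w \<and> cox_weight G v w \<noteq> 0"

definition components :: "real^'n^'n \<Rightarrow> (real^'n) set \<Rightarrow> (real^'n) set set" where
  "components G J = (\<lambda>v. {w\<in>J. (cox_adj G J)\<^sup>*\<^sup>* v w}) ` J"

text \<open>Standard Dynkin diagrams on vertex set {0..<m}, given by their edge sets.\<close>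
definition edges_A1 :: "nat set set" where "edges_A1 = {}"
definition edges_D :: "nat \<Rightarrow> nat set set" where
  "edges_D m = {{i, i+1} | i. i + 2 < m} \<union> {{m-3, m-1}}"
definition edges_E7 :: "nat set set" where
  "edges_E7 = {{0,1},{1,2},{2,3},{3,4},{4,5},{2,6}}"
definition edges_E8 :: "nat set set" where
  "edges_E8 = {{0,1},{1,2},{2,3},{3,4},{4,5},{5,6},{2,7}}"

definition has_type :: "real^'n^'n \<Rightarrow> (real^'n) set \<Rightarrow> nat \<Rightarrow> nat set set \<Rightarrow> bool" where
  "has_type G K m E \<longleftrightarrow> (\<exists>\<phi>. bij_betw \<phi> {0..<m} K \<and>
     (\<forall>i<m. \<forall>j<m. i \<noteq> j \<longrightarrow> cox_weight G (\<phi> i) (\<phi> j) = (if {i,j} \<in> E then 1 else 0)))"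

definition allowed_type :: "real^'n^'n \<Rightarrow> (real^'n) set \<Rightarrow> bool" where
  "allowed_type G K \<longleftrightarrow> has_type G K 1 edges_A1 \<or>
     (\<exists>n\<ge>2. has_type G K (2*n) (edges_D (2*n))) \<or>
     has_type G K 7 edges_E7 \<or> has_type G K 8 edges_E8"

definition lattice_span :: "(real^'n) set \<Rightarrow> (real^'n) set" where
  "lattice_span J = {y. \<exists>c. (\<forall>v. c v \<in> \<int>) \<and> y = (\<Sum>v\<in>J. c v *\<^sub>R v)}"

definition orth_complement :: "real^'n^'n \<Rightarrow> (real^'n) set \<Rightarrow> (real^'n) set \<Rightarrow> (real^'n) set" where
  "orth_complement G M S = {x\<in>M. \<forall>y\<in>S. bform G x y = 0}"

end

theory Submission
  imports Defs
begin

(* The component types A_1, D_2n, E_7, E_8 are exactly those trees whose Cartan matrix A has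
   2 A^-1 integral. After normalising the roots of a component to a common norm 2t (t = 1 or 3:
   a 2-root and a 6-root joined by an edge would have product 3 = b^2 with b integral) and
   choosing signs, their Gram matrix is t A. This yields, for every x in L, some y in L_J with
   2x - y orthogonal to J; for 6-roots the coefficients stay integral because x.v is divisible
   by 3. Hence L (x) R is the orthogonal sum of span J, which is positive definite, and
   span L^J, and the roots of L^J are roots of L. The projection onto span L^J therefore maps
   the chamber P^# of L into a chamber of L^J, which f preserves since it commutes with the
   projection. Finally, if 3^k x lies in L^J then x - 3^k x represents an element of discr_3 L,
   so f remains Z/3-reversing on L^J. *)

lemma bilinear_bform: "bilinear (bform G)"
  unfolding bilinear_def bform_def
  by (auto intro!: linearI simp: inner_add_left inner_add_right
      matrix_vector_right_distrib matrix_vector_mult_scaleR)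

lemma bform_sum_left: "bform G (sum f S) z = (\<Sum>i\<in>S. bform G (f i) z)"
  using linear_sum[of "\<lambda>x. bform G x z"] bilinear_bform unfolding bilinear_def by blast

lemma bform_sum_right: "bform G z (sum f S) = (\<Sum>i\<in>S. bform G z (f i))"
  using linear_sum[of "\<lambda>x. bform G z x"] bilinear_bform unfolding bilinear_def by blast

lemmas bform_simps =
  bilinear_ladd[OF bilinear_bform] bilinear_radd[OF bilinear_bform]
  bilinear_lsub[OF bilinear_bform] bilinear_rsub[OF bilinear_bform]
  bilinear_lmul[OF bilinear_bform] bilinear_rmul[OF bilinear_bform]
  bilinear_lneg[OF bilinear_bform] bilinear_rneg[OF bilinear_bform]
  bilinear_lzero[OF bilinear_bform] bilinear_rzero[OF bilinear_bform]
  bform_sum_left bform_sum_right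

lemma bform_commute:
  assumes "integral_symmetric G"
  shows "bform G x y = bform G y x"
proof -
  have "transpose G = G" using assms by (simp add: integral_symmetric_def)
  then have "x v* G = G *v x" by (metis transpose_matrix_vector)
  then show ?thesis by (simp add: bform_def dot_lmul_matrix[symmetric] inner_commute)
qed

lemma bform_Ints:
  assumes "integral_symmetric G" "x \<in> Zn" "y \<in> Zn"
  shows "bform G x y \<in> \<int>"
proof -
  have "bform G x y = (\<Sum>i\<in>UNIV. x $ i * (\<Sum>j\<in>UNIV. G $ i $ j * y $ j))"
    by (simp add: bform_def inner_vec_def matrix_vector_mult_def)
  also have "\<dots> \<in> \<int>"
    using assms unfolding Zn_def integral_symmetric_def by (intro Ints_sum Ints_mult) auto
  finally show ?thesis .
qed

lemma bform_span_orthogonal: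
  assumes "\<And>x y. x \<in> S \<Longrightarrow> y \<in> T \<Longrightarrow> bform G x y = 0" "x \<in> span S" "y \<in> span T"
  shows "bform G x y = 0"
proof -
  have "bilinear (\<lambda>(_::real^'n) (_::real^'n). 0::real)"
    by (simp add: bilinear_def bounded_linear.linear)
  then show ?thesis using bilinear_eq[OF bilinear_bform _ _ _ assms(2,3)] assms(1) by blast
qed

lemma bilinear_bform_compose: "linear h \<Longrightarrow> bilinear (\<lambda>x y. bform G (h x) (h y))"
  using bilinear_bform unfolding bilinear_def by (auto intro: linear_compose[unfolded o_def])

lemma bform_isometry_span:
  assumes "linear h" "\<And>x y. x \<in> M \<Longrightarrow> y \<in> M \<Longrightarrow> bform G (h x) (h y) = bform G x y"
    "x \<in> span M" "y \<in> span M"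
  shows "bform G (h x) (h y) = bform G x y"
  using bilinear_eq[OF bilinear_bform_compose[OF assms(1)] bilinear_bform, of "span M" M "span M" M]
    assms by auto

lemma Zn_add: "x \<in> Zn \<Longrightarrow> y \<in> Zn \<Longrightarrow> x + y \<in> Zn"
  and Zn_diff: "x \<in> Zn \<Longrightarrow> y \<in> Zn \<Longrightarrow> x - y \<in> Zn"
  and Zn_scale: "a \<in> \<int> \<Longrightarrow> x \<in> Zn \<Longrightarrow> a *\<^sub>R x \<in> Zn"
  by (simp_all add: Zn_def)

lemma Zn_sum: "(\<And>i. i \<in> S \<Longrightarrow> f i \<in> Zn) \<Longrightarrow> sum f S \<in> Zn"
  by (induction S rule: infinite_finite_induct) (auto simp: Zn_def)

lemma span_Zn: "span Zn = UNIV"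
proof -
  have "Basis \<subseteq> Zn" by (auto simp: Basis_vec_def Zn_def axis_def)
  then show ?thesis by (metis span_Basis span_mono top.extremum_uniqueI)
qed

lemma lattice_aut_isometry:
  assumes "lattice_aut G Zn h"
  shows "bform G (h x) (h y) = bform G x y"
  using assms bform_isometry_span[of h Zn G x y] unfolding lattice_aut_def by (simp add: span_Zn)

lemma lattice_aut_Zn_invertible:
  assumes "lattice_aut G Zn h"
  obtains g where "linear g" "\<And>x. g (h x) = x" "\<And>x. h (g x) = x"
proof -
  have lin: "linear h" and hZ: "h ` Zn = Zn" using assms by (auto simp: lattice_aut_def)
  have "surj h"
    using span_linear_image[OF lin, of Zn] hZ span_Zn by (metis image_subsetI rangeI subset_antisym top_greatest)
  then show ?thesis using linear_surjective_isomorphism[OF lin] that by blast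
qed

lemma lattice_span_zero: "0 \<in> lattice_span K"
  unfolding lattice_span_def by (auto intro!: exI[of _ "\<lambda>_. 0"])

lemma lattice_span_base:
  assumes "finite K" "v \<in> K"
  shows "v \<in> lattice_span K"
proof -
  have "(\<Sum>w\<in>K. (if w = v then 1 else 0) *\<^sub>R w) = v"
    using assms by (simp add: if_distrib[of "\<lambda>c. c *\<^sub>R _"] cong: if_cong)
  then show ?thesis
    unfolding lattice_span_def by (intro CollectI exI[of _ "\<lambda>w. if w = v then 1 else 0"]) auto
qed

lemma lattice_span_add:
  assumes "y \<in> lattice_span K" "z \<in> lattice_span K"
  shows "y + z \<in> lattice_span K"
proof -
  obtain c d where "\<forall>v. c v \<in> \<int>" "y = (\<Sum>v\<in>K. c v *\<^sub>R v)" "\<forall>v. d v \<in> \<int>" "z = (\<Sum>v\<in>K. d v *\<^sub>R v)"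
    using assms unfolding lattice_span_def by blast
  then show ?thesis unfolding lattice_span_def
    by (intro CollectI exI[of _ "\<lambda>v. c v + d v"]) (simp add: scaleR_add_left sum.distrib)
qed

lemma lattice_span_scale:
  assumes "a \<in> \<int>" "y \<in> lattice_span K"
  shows "a *\<^sub>R y \<in> lattice_span K"
proof -
  obtain c where "\<forall>v. c v \<in> \<int>" "y = (\<Sum>v\<in>K. c v *\<^sub>R v)"
    using assms(2) unfolding lattice_span_def by blast
  then show ?thesis using assms(1) unfolding lattice_span_def
    by (intro CollectI exI[of _ "\<lambda>v. a * c v"]) (simp add: scaleR_sum_right)
qed

lemma lattice_span_sum: "(\<And>i. i \<in> I \<Longrightarrow> f i \<in> lattice_span K) \<Longrightarrow> sum f I \<in> lattice_span K"
  by (induction I rule: infinite_finite_induct) (auto simp: lattice_span_zero lattice_span_add)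

lemma lattice_span_mono:
  assumes "S \<subseteq> T" "finite T"
  shows "lattice_span S \<subseteq> lattice_span T"
  using assms unfolding lattice_span_def[of S]
  by (auto intro!: lattice_span_sum lattice_span_scale intro: lattice_span_base)

lemma lattice_span_subset_span: "lattice_span K \<subseteq> span K"
  unfolding lattice_span_def by (auto intro!: span_sum span_scale intro: span_base)

lemma lattice_span_subset_Zn: "K \<subseteq> Zn \<Longrightarrow> lattice_span K \<subseteq> Zn"
  unfolding lattice_span_def by (auto intro!: Zn_sum Zn_scale)

lemma bform_lattice_span_left:
  assumes "y \<in> lattice_span K" "\<And>v. v \<in> K \<Longrightarrow> bform G v w = 0"
  shows "bform G y w = 0"
  using assms unfolding lattice_span_def by (auto simp: bform_simps)

lemma bform_lattice_span_right:
  assumes "y \<in> lattice_span K" "\<And>v. v \<in> K \<Longrightarrow> bform G w v = 0"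
  shows "bform G w y = 0"
  using assms unfolding lattice_span_def by (auto simp: bform_simps)

definition cartan :: "nat set set \<Rightarrow> nat \<Rightarrow> nat \<Rightarrow> int" where
  "cartan E j k = (if j = k then 2 else if {j, k} \<in> E then -1 else 0)"

text \<open>Twice the inverse Cartan matrix is integral, i.e. the discriminant group of the root
  lattice is 2-elementary.\<close>
definition two_elementary :: "nat \<Rightarrow> nat set set \<Rightarrow> bool" where
  "two_elementary m E \<longleftrightarrow>
     (\<forall>i<m. \<exists>c::nat \<Rightarrow> int. \<forall>k<m. (\<Sum>j<m. c j * cartan E j k) = (if k = i then 2 else 0))"

definition ordered_tree :: "nat \<Rightarrow> nat set set \<Rightarrow> bool" where
  "ordered_tree m E \<longleftrightarrow>
     (\<forall>k<m. 0 < k \<longrightarrow> (\<exists>p<k. {p, k} \<in> E \<and> (\<forall>q<k. {q, k} \<in> E \<longrightarrow> q = p)))"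

definition neighbours :: "nat \<Rightarrow> nat set set \<Rightarrow> nat \<Rightarrow> nat set" where
  "neighbours m E k = {j. j < m \<and> j \<noteq> k \<and> {j, k} \<in> E}"

lemma sum_cartan:
  "(\<Sum>j<m. c j * cartan E j k) = (if k < m then 2 * c k else 0) - (\<Sum>j\<in>neighbours m E k. c j)"
proof -
  have "(\<Sum>j<m. c j * cartan E j k) =
      (\<Sum>j<m. if j = k then 2 * c j else 0) - (\<Sum>j<m. if j \<noteq> k \<and> {j, k} \<in> E then c j else 0)"
    unfolding sum_subtractf[symmetric] by (rule sum.cong) (auto simp: cartan_def)
  then show ?thesis
    unfolding neighbours_def by (simp add: sum.inter_filter[symmetric] sum.delta')
qed

lemma two_elementary_A1: "two_elementary 1 edges_A1"
  unfolding two_elementary_def by (intro allI impI exI[of _ "\<lambda>_. 1"]) (simp add: cartan_def)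

lemma ordered_tree_A1: "ordered_tree 1 edges_A1"
  unfolding ordered_tree_def by simp

lemma two_elementary_E7: "two_elementary 7 edges_E7"
proof -
  define W :: "int list list" where "W = [[4, 6, 8, 6, 4, 2, 4], [6, 12, 16, 12, 8, 4, 8],
    [8, 16, 24, 18, 12, 6, 12], [6, 12, 18, 15, 10, 5, 9], [4, 8, 12, 10, 8, 4, 6],
    [2, 4, 6, 5, 4, 3, 3], [4, 8, 12, 9, 6, 3, 7]]"
  have "\<forall>i<7. \<forall>k<7. (\<Sum>j<7. W ! i ! j * cartan edges_E7 j k) = (if k = i then 2 else 0)"
    by (simp add: W_def numeral_eq_Suc All_less_Suc lessThan_Suc cartan_def edges_E7_def
        doubleton_eq_iff)
  then show ?thesis unfolding two_elementary_def by blast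
qed

lemma two_elementary_E8: "two_elementary 8 edges_E8"
proof -
  define W :: "int list list" where "W = [[8, 14, 20, 16, 12, 8, 4, 10],
    [14, 28, 40, 32, 24, 16, 8, 20], [20, 40, 60, 48, 36, 24, 12, 30],
    [16, 32, 48, 40, 30, 20, 10, 24], [12, 24, 36, 30, 24, 16, 8, 18],
    [8, 16, 24, 20, 16, 12, 6, 12], [4, 8, 12, 10, 8, 6, 4, 6], [10, 20, 30, 24, 18, 12, 6, 16]]"
  have "\<forall>i<8. \<forall>k<8. (\<Sum>j<8. W ! i ! j * cartan edges_E8 j k) = (if k = i then 2 else 0)"
    by (simp add: W_def numeral_eq_Suc All_less_Suc lessThan_Suc cartan_def edges_E8_def
        doubleton_eq_iff)
  then show ?thesis unfolding two_elementary_def by blast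
qed

lemma ordered_tree_E7: "ordered_tree 7 edges_E7"
  unfolding ordered_tree_def
  by (auto simp: numeral_eq_Suc All_less_Suc Ex_less_Suc edges_E7_def doubleton_eq_iff)

lemma ordered_tree_E8: "ordered_tree 8 edges_E8"
  unfolding ordered_tree_def
  by (auto simp: numeral_eq_Suc All_less_Suc Ex_less_Suc edges_E8_def doubleton_eq_iff)

lemma edges_D_iff:
  assumes "4 \<le> m" "j \<noteq> k"
  shows "{j, k} \<in> edges_D m \<longleftrightarrow>
    (k = j + 1 \<and> j + 2 < m) \<or> (j = k + 1 \<and> k + 2 < m) \<or>
    (j = m - 3 \<and> k = m - 1) \<or> (j = m - 1 \<and> k = m - 3)"
  using assms unfolding edges_D_def by (auto simp: doubleton_eq_iff)

lemma ordered_tree_D: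
  assumes "4 \<le> m"
  shows "ordered_tree m (edges_D m)"
  unfolding ordered_tree_def
proof (intro allI impI)
  fix k assume "k < m" "0 < k"
  then show "\<exists>p<k. {p, k} \<in> edges_D m \<and> (\<forall>q<k. {q, k} \<in> edges_D m \<longrightarrow> q = p)"
    using assms by (intro exI[of _ "if k = m - 1 then m - 3 else k - 1"]) (auto simp: edges_D_iff)
qed

lemma neighbours_D:
  assumes "4 \<le> m"
  shows "neighbours m (edges_D m) 0 = {1}"
    and "1 \<le> k \<Longrightarrow> k + 4 \<le> m \<Longrightarrow> neighbours m (edges_D m) k = {k - 1, k + 1}"
    and "neighbours m (edges_D m) (m - 3) = {m - 4, m - 2, m - 1}"
    and "neighbours m (edges_D m) (m - 2) = {m - 3}"
    and "neighbours m (edges_D m) (m - 1) = {m - 3}"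
  using assms by (auto simp: neighbours_def edges_D_iff)

lemma sum_cartan_D:
  assumes m4: "4 \<le> m" and km: "k < m"
  shows "(\<Sum>j<m. c j * cartan (edges_D m) j k) =
    (if k = 0 then 2 * c 0 - c 1
     else if k + 4 \<le> m then 2 * c k - c (k - 1) - c (k + 1)
     else if k = m - 3 then 2 * c k - c (m - 4) - c (m - 2) - c (m - 1)
     else 2 * c k - c (m - 3))"
proof -
  have S: "(\<Sum>j<m. c j * cartan (edges_D m) j k) = 2 * c k - (\<Sum>j\<in>neighbours m (edges_D m) k. c j)"
    using km by (simp add: sum_cartan)
  consider "k = 0" | "1 \<le> k" "k + 4 \<le> m" | "k = m - 3" | "k = m - 2 \<or> k = m - 1"
    using km m4 by linarith
  then show ?thesis
  proof cases
    case 1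
    then show ?thesis unfolding S using neighbours_D(1)[OF m4] by simp
  next
    case 2
    moreover have "k - 1 \<noteq> k + 1" by simp
    ultimately show ?thesis unfolding S neighbours_D(2)[OF m4 2] by simp
  next
    case 3
    moreover have "m - 4 \<noteq> m - 2" "m - 4 \<noteq> m - 1" "m - 2 \<noteq> m - 1" "m - 3 \<noteq> 0" using m4 by auto
    ultimately show ?thesis unfolding S using neighbours_D(3)[OF m4] m4 by (simp add: algebra_simps)
  next
    case 4
    then have "neighbours m (edges_D m) k = {m - 3}" "k \<noteq> 0" "\<not> k + 4 \<le> m" "k \<noteq> m - 3"
      using neighbours_D(4,5)[OF m4] m4 by auto
    then show ?thesis unfolding S by simp
  qed
qed

lemma twice_inverse_cartan_D_chain:
  assumes m4: "4 \<le> m" and i: "i \<le> m - 3" and km: "k < m"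
  defines "c \<equiv> \<lambda>j. if j \<le> m - 3 then 2 * (int (min i j) + 1) else int i + 1"
  shows "(\<Sum>j<m. c j * cartan (edges_D m) j k) = (if k = i then 2 else 0)"
proof -
  consider "k = 0" | "1 \<le> k" "k + 4 \<le> m" | "k = m - 3" | "k = m - 2 \<or> k = m - 1"
    using km m4 by linarith
  then show ?thesis
  proof cases
    case 1
    moreover have "c 0 = 2" "c 1 = 2 * (int (min i 1) + 1)" using m4 by (auto simp: c_def)
    ultimately show ?thesis unfolding sum_cartan_D[OF m4 km] by (cases "i = 0") auto
  next
    case 2
    moreover have "c k = 2 * (int (min i k) + 1)" "c (k - 1) = 2 * (int (min i (k - 1)) + 1)"
      "c (k + 1) = 2 * (int (min i (k + 1)) + 1)"
      using 2 by (auto simp: c_def)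
    ultimately show ?thesis unfolding sum_cartan_D[OF m4 km]
      by (cases "i < k"; cases "i = k") (auto simp: min_def)
  next
    case 3
    have "i = m - 3 \<or> i \<le> m - 4" using i m4 by linarith
    then have "c (m - 4) = (if i = m - 3 then 2 * int i else 2 * (int i + 1))"
      using m4 by (auto simp: c_def min_def)
    moreover have "c k = 2 * (int i + 1)" "c (m - 2) = int i + 1" "c (m - 1) = int i + 1"
      using 3 m4 i by (auto simp: c_def)
    ultimately show ?thesis unfolding sum_cartan_D[OF m4 km] using 3 m4 by auto
  next
    case 4
    moreover have "c k = int i + 1" "c (m - 3) = 2 * (int i + 1)" using 4 m4 i by (auto simp: c_def)
    ultimately show ?thesis unfolding sum_cartan_D[OF m4 km] using m4 i by auto
  qed
qed

lemma twice_inverse_cartan_D_spin: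
  assumes m4: "4 \<le> m" and mn: "m = 2 * n" and i: "i = m - 2 \<or> i = m - 1" and km: "k < m"
  defines "c \<equiv> \<lambda>j. if j \<le> m - 3 then int j + 1 else if j = i then int n else int n - 1"
  shows "(\<Sum>j<m. c j * cartan (edges_D m) j k) = (if k = i then 2 else 0)"
proof -
  consider "k = 0" | "1 \<le> k" "k + 4 \<le> m" | "k = m - 3" | "k = m - 2 \<or> k = m - 1"
    using km m4 by linarith
  then show ?thesis
  proof cases
    case 1
    moreover have "c 0 = 1" "c 1 = 2" "k \<noteq> i" using 1 m4 i by (auto simp: c_def)
    ultimately show ?thesis unfolding sum_cartan_D[OF m4 km] by simp
  next
    case 2
    moreover have "c k = int k + 1" "c (k - 1) = int k" "c (k + 1) = int k + 2" "k \<noteq> i"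
      using 2 i by (auto simp: c_def)
    ultimately show ?thesis unfolding sum_cartan_D[OF m4 km] by simp
  next
    case 3
    moreover have "c k = int m - 2" "c (m - 4) = int m - 3" "c (m - 2) + c (m - 1) = 2 * int n - 1"
      "k \<noteq> i" "k \<noteq> 0" "\<not> k + 4 \<le> m"
      using 3 m4 i mn by (auto simp: c_def)
    ultimately show ?thesis unfolding sum_cartan_D[OF m4 km] using mn by simp
  next
    case 4
    moreover have "c k = (if k = i then int n else int n - 1)" "c (m - 3) = int m - 2"
      "k \<noteq> 0" "\<not> k + 4 \<le> m" "k \<noteq> m - 3"
      using 4 m4 i by (auto simp: c_def)
    ultimately show ?thesis unfolding sum_cartan_D[OF m4 km] using mn by simp
  qed
qed

lemma two_elementary_D:
  assumes "2 \<le> n"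
  shows "two_elementary (2 * n) (edges_D (2 * n))"
  unfolding two_elementary_def
proof (intro allI impI)
  fix i assume i: "i < 2 * n"
  have m4: "4 \<le> 2 * n" using assms by simp
  show "\<exists>c. \<forall>k<2 * n. (\<Sum>j<2 * n. c j * cartan (edges_D (2 * n)) j k) = (if k = i then 2 else 0)"
  proof (cases "i \<le> 2 * n - 3")
    case True
    show ?thesis
      by (rule exI[of _ "\<lambda>j. if j \<le> 2 * n - 3 then 2 * (int (min i j) + 1) else int i + 1"])
        (use twice_inverse_cartan_D_chain[OF m4 True] in auto)
  next
    case False
    then have "i = 2 * n - 2 \<or> i = 2 * n - 1" using i by linarith
    show ?thesis
      by (rule exI[of _ "\<lambda>j. if j \<le> 2 * n - 3 then int j + 1 else if j = i then int n else int n - 1"])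
        (use twice_inverse_cartan_D_spin[OF m4 refl \<open>i = 2 * n - 2 \<or> i = 2 * n - 1\<close>] in auto)
  qed
qed

lemma allowed_type_tree:
  assumes "allowed_type G K"
  obtains m E where "has_type G K m E" "two_elementary m E" "ordered_tree m E" "0 < m"
  using assms unfolding allowed_type_def
proof (elim disjE exE conjE)
  assume "has_type G K 1 edges_A1"
  then show thesis using that two_elementary_A1 ordered_tree_A1 by simp
next
  fix n assume "2 \<le> n" "has_type G K (2 * n) (edges_D (2 * n))"
  then show thesis using that two_elementary_D ordered_tree_D[of "2 * n"] by simp
next
  assume "has_type G K 7 edges_E7"
  then show thesis using that two_elementary_E7 ordered_tree_E7 by simp
next
  assume "has_type G K 8 edges_E8"
  then show thesis using that two_elementary_E8 ordered_tree_E8 by simp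
qed

lemma ordered_tree_constant:
  assumes tree: "ordered_tree m E" and edge: "\<And>i j. i < m \<Longrightarrow> j < m \<Longrightarrow> {i, j} \<in> E \<Longrightarrow> N i = N j"
  shows "i < m \<Longrightarrow> N i = N 0"
proof (induction i rule: less_induct)
  case (less i)
  show ?case
  proof (cases "i = 0")
    case False
    then have "0 < i" by simp
    then obtain p where p: "p < i" "{p, i} \<in> E"
      using tree less.prems unfolding ordered_tree_def by blast
    moreover have "p < m" using p less.prems by simp
    ultimately have "N p = N 0" using less.IH by blast
    moreover have "N p = N i" using edge p \<open>p < m\<close> less.prems by blast
    ultimately show ?thesis by simp
  qed simp
qed

definition edge_signs ::
    "nat \<Rightarrow> nat set set \<Rightarrow> (nat \<Rightarrow> nat \<Rightarrow> real) \<Rightarrow> real \<Rightarrow> (nat \<Rightarrow> real) \<Rightarrow> bool"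
  where "edge_signs m E b t s \<longleftrightarrow> (\<forall>i. s i = 1 \<or> s i = -1) \<and>
    (\<forall>i<m. \<forall>j<m. i \<noteq> j \<longrightarrow> {i, j} \<in> E \<longrightarrow> s i * s j * b i j = - t)"

lemma edge_signs_extend:
  fixes b :: "nat \<Rightarrow> nat \<Rightarrow> real"
  assumes s: "edge_signs k E b t s" and sym: "\<And>i j. b i j = b j i" and "t > 0"
    and p: "p < k" and parent: "\<And>q. q < k \<Longrightarrow> {q, k} \<in> E \<Longrightarrow> q = p"
    and "(b p k)\<^sup>2 = t\<^sup>2"
  shows "edge_signs (Suc k) E b t (s(k := if b p k = t then - s p else s p))"
    (is "edge_signs _ _ _ _ ?s")
proof -
  have sign: "s i = 1 \<or> s i = -1" for i using s unfolding edge_signs_def by blast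
  then have sign': "?s i = 1 \<or> ?s i = -1" for i by (simp split: if_split) blast
  have "b p k = t \<or> b p k = - t" using \<open>(b p k)\<^sup>2 = t\<^sup>2\<close> by (simp add: power2_eq_iff)
  moreover have "s p * s p = 1" using sign[of p] by auto
  ultimately have new_edge: "?s p * ?s k * b p k = - t" using p \<open>t > 0\<close> by auto
  have "?s i * ?s j * b i j = - t" if ij: "i < Suc k" "j < Suc k" "i \<noteq> j" "{i, j} \<in> E" for i j
  proof -
    consider "i = k" | "j = k" | "i < k" "j < k" using ij by linarith
    then show ?thesis
    proof cases
      case 1
      then have "j = p" using ij parent[of j] by (simp add: insert_commute)
      then show ?thesis using 1 new_edge sym[of p k] by (simp add: mult.commute)
    next
      case 2
      then have "i = p" using ij parent[of i] by simp
      then show ?thesis using 2 new_edge by simp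
    next
      case 3
      then show ?thesis using s ij unfolding edge_signs_def by simp
    qed
  qed
  then show ?thesis using sign' unfolding edge_signs_def by blast
qed

lemma ordered_tree_edge_signs:
  fixes b :: "nat \<Rightarrow> nat \<Rightarrow> real"
  assumes tree: "ordered_tree m E" and sym: "\<And>i j. b i j = b j i" and "t > 0"
    and edge: "\<And>i j. i < m \<Longrightarrow> j < m \<Longrightarrow> i \<noteq> j \<Longrightarrow> {i, j} \<in> E \<Longrightarrow> (b i j)\<^sup>2 = t\<^sup>2"
  shows "\<exists>s. edge_signs m E b t s"
proof -
  have "\<exists>s. edge_signs k E b t s" if "k \<le> m" for k
    using that
  proof (induction k)
    case 0
    show ?case by (intro exI[of _ "\<lambda>_. 1"]) (simp add: edge_signs_def)
  next
    case (Suc k)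
    then obtain s where s: "edge_signs k E b t s" by auto
    show ?case
    proof (cases "k = 0")
      case True
      then show ?thesis using s by (intro exI[of _ s]) (auto simp: edge_signs_def)
    next
      case False
      then have "0 < k" "k < m" using Suc.prems by auto
      then obtain p where p: "p < k" "{p, k} \<in> E"
        and parent: "\<And>q. q < k \<Longrightarrow> {q, k} \<in> E \<Longrightarrow> q = p"
        using tree unfolding ordered_tree_def by blast
      have "(b p k)\<^sup>2 = t\<^sup>2" using edge p \<open>k < m\<close> by simp
      then show ?thesis using edge_signs_extend[OF s sym \<open>t > 0\<close> p(1) parent] by blast
    qed
  qed
  then show ?thesis by blast
qed

lemma Ints_square_neq_3:
  assumes "(b::real) \<in> \<int>"
  shows "b * b \<noteq> 3"
proof
  assume "b * b = 3"
  obtain z where "b = of_int z" using assms Ints_cases by blast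
  then have "z * z = 3" using \<open>b * b = 3\<close> by (metis of_int_eq_iff of_int_mult of_int_numeral)
  then have "odd z" by (metis even_mult_iff odd_numeral)
  then obtain k where "z = 2 * k + 1" by (metis oddE)
  then have "1 = 2 * (k * k + k)" using \<open>z * z = 3\<close> by (simp add: algebra_simps)
  then show False by (metis dvd_triv_left odd_one)
qed

lemma two_elementary_realize:
  fixes u :: "nat \<Rightarrow> real^'n" and t :: real
  assumes "two_elementary m E"
    and gram: "\<And>i j. i < m \<Longrightarrow> j < m \<Longrightarrow> bform G (u i) (u j) = t * of_int (cartan E i j)"
    and \<beta>: "\<And>k. k < m \<Longrightarrow> \<beta> k \<in> \<int>"
  obtains c where "\<And>j. c j \<in> \<int>"
    and "\<And>k. k < m \<Longrightarrow> bform G (\<Sum>j<m. c j *\<^sub>R u j) (u k) = 2 * t * \<beta> k"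
proof -
  obtain C :: "nat \<Rightarrow> nat \<Rightarrow> int"
    where C: "\<And>i k. i < m \<Longrightarrow> k < m \<Longrightarrow> (\<Sum>j<m. C i j * cartan E j k) = (if k = i then 2 else 0)"
    using assms(1) unfolding two_elementary_def by metis
  define c where "c j = (\<Sum>i<m. \<beta> i * of_int (C i j))" for j
  have "c j \<in> \<int>" for j unfolding c_def by (intro Ints_sum Ints_mult Ints_of_int \<beta>) simp
  moreover have "bform G (\<Sum>j<m. c j *\<^sub>R u j) (u k) = 2 * t * \<beta> k" if "k < m" for k
  proof -
    have "bform G (\<Sum>j<m. c j *\<^sub>R u j) (u k) = (\<Sum>j<m. c j * (t * of_int (cartan E j k)))"
      using gram that by (simp add: bform_simps)
    also have "\<dots> = t * (\<Sum>i<m. \<beta> i * of_int (\<Sum>j<m. C i j * cartan E j k))"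
      unfolding c_def sum_distrib_left sum_distrib_right
      by (subst sum.swap) (simp add: sum_distrib_left algebra_simps)
    also have "\<dots> = t * (\<Sum>i<m. if i = k then 2 * \<beta> i else 0)"
      using C that by (intro arg_cong[where f = "(*) t"] sum.cong) auto
    also have "\<dots> = 2 * t * \<beta> k" using that by simp
    finally show ?thesis .
  qed
  ultimately show ?thesis using that by blast
qed

definition twice_functionals_realized :: "real^'n^'n \<Rightarrow> (real^'n) set \<Rightarrow> bool" where
  "twice_functionals_realized G K \<longleftrightarrow>
     (\<forall>x\<in>Zn. \<exists>y\<in>lattice_span K. \<forall>w\<in>K. bform G y w = 2 * bform G x w)"

lemma tree_type_norm:
  assumes GI: "integral_symmetric G" and KR: "K \<subseteq> roots G Zn"
    and \<phi>: "bij_betw \<phi> {0..<m} K"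
    and weight: "\<And>i j. i < m \<Longrightarrow> j < m \<Longrightarrow> i \<noteq> j \<Longrightarrow>
       cox_weight G (\<phi> i) (\<phi> j) = (if {i, j} \<in> E then 1 else 0)"
    and tree: "ordered_tree m E" and "0 < m"
  obtains t where "t = 1 \<or> t = 3" "\<And>i. i < m \<Longrightarrow> bform G (\<phi> i) (\<phi> i) = 2 * t"
proof -
  define N where "N i = bform G (\<phi> i) (\<phi> i)" for i
  have root: "\<phi> i \<in> roots G Zn" if "i < m" for i using bij_betw_apply[OF \<phi>] KR that by auto
  then have N26: "N i = 2 \<or> N i = 6" if "i < m" for i using that unfolding roots_def N_def by auto
  have "N i = N j" if ij: "i < m" "j < m" "{i, j} \<in> E" for i j
  proof (rule ccontr)
    assume "N i \<noteq> N j"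
    then have "N i * N j = 12" using N26[OF ij(1)] N26[OF ij(2)] by auto
    moreover have "i \<noteq> j" using \<open>N i \<noteq> N j\<close> by auto
    then have "cox_weight G (\<phi> i) (\<phi> j) = 1" using weight ij by simp
    ultimately have "4 * (bform G (\<phi> i) (\<phi> j))\<^sup>2 = 12"
      unfolding cox_weight_def N_def by (simp add: field_simps)
    then have "bform G (\<phi> i) (\<phi> j) * bform G (\<phi> i) (\<phi> j) = 3" by (simp add: power2_eq_square)
    moreover have "bform G (\<phi> i) (\<phi> j) \<in> \<int>"
      using bform_Ints[OF GI] root ij unfolding roots_def by blast
    ultimately show False using Ints_square_neq_3 by blast
  qed
  then have N0: "N i = N 0" if "i < m" for i using ordered_tree_constant[OF tree, of N] that by blast
  show ?thesis
  proof (rule that)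
    show "N 0 / 2 = 1 \<or> N 0 / 2 = 3" using N26[OF \<open>0 < m\<close>] by auto
    show "bform G (\<phi> i) (\<phi> i) = 2 * (N 0 / 2)" if "i < m" for i
      using N0[OF that] unfolding N_def by simp
  qed
qed

lemma root_bform_divisible:
  assumes GI: "integral_symmetric G" and v: "v \<in> roots G Zn" and x: "x \<in> Zn"
    and norm: "bform G v v = 2 * t" and t: "t = 1 \<or> t = 3"
  shows "bform G x v / t \<in> \<int>"
  using t
proof
  assume "t = 1"
  then show ?thesis using bform_Ints[OF GI x] v unfolding roots_def by simp
next
  assume "t = 3"
  then have "bform G v x / 3 \<in> \<int>" using v x norm unfolding roots_def by auto
  then show ?thesis using \<open>t = 3\<close> bform_commute[OF GI] by metis
qed

lemma tree_type_cartan_signs: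
  assumes GI: "integral_symmetric G" and "K \<subseteq> roots G Zn"
    and "bij_betw \<phi> {0..<m} K"
    and weight: "\<And>i j. i < m \<Longrightarrow> j < m \<Longrightarrow> i \<noteq> j \<Longrightarrow>
       cox_weight G (\<phi> i) (\<phi> j) = (if {i, j} \<in> E then 1 else 0)"
    and tree: "ordered_tree m E" and "0 < m"
  obtains t s where "t = 1 \<or> t = 3" "\<And>i. i < m \<Longrightarrow> bform G (\<phi> i) (\<phi> i) = 2 * t"
    "\<And>i. s i = 1 \<or> s i = -1"
    "\<And>i j. i < m \<Longrightarrow> j < m \<Longrightarrow>
       bform G (s i *\<^sub>R \<phi> i) (s j *\<^sub>R \<phi> j) = t * of_int (cartan E i j)"
proof -
  obtain t where t: "t = 1 \<or> t = 3" and norm: "\<And>i. i < m \<Longrightarrow> bform G (\<phi> i) (\<phi> i) = 2 * t"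
    using tree_type_norm[OF assms] by blast
  define b where "b i j = bform G (\<phi> i) (\<phi> j)" for i j
  have "t > 0" using t by auto
  have weight_b: "4 * (b i j)\<^sup>2 = (if {i, j} \<in> E then 4 * t\<^sup>2 else 0)"
    if "i < m" "j < m" "i \<noteq> j" for i j
    using weight[OF that] norm[OF that(1)] norm[OF that(2)] \<open>t > 0\<close>
    unfolding cox_weight_def b_def by (auto simp: field_simps power2_eq_square split: if_splits)
  have b_sym: "b i j = b j i" for i j unfolding b_def using bform_commute[OF GI] by metis
  have b_edge: "(b i j)\<^sup>2 = t\<^sup>2" if "i < m" "j < m" "i \<noteq> j" "{i, j} \<in> E" for i j
    using weight_b[OF that(1-3)] that(4) by simp
  obtain s where "edge_signs m E b t s"
    using ordered_tree_edge_signs[where b = b, OF tree b_sym \<open>t > 0\<close> b_edge] by blast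
  then have s: "\<And>i. s i = 1 \<or> s i = -1"
    and signed: "\<And>i j. i < m \<Longrightarrow> j < m \<Longrightarrow> i \<noteq> j \<Longrightarrow> {i, j} \<in> E \<Longrightarrow> s i * s j * b i j = - t"
    unfolding edge_signs_def by blast+
  have "bform G (s i *\<^sub>R \<phi> i) (s j *\<^sub>R \<phi> j) = t * of_int (cartan E i j)" if "i < m" "j < m" for i j
  proof -
    have "bform G (s i *\<^sub>R \<phi> i) (s j *\<^sub>R \<phi> j) = s i * s j * b i j"
      unfolding b_def by (simp add: bform_simps)
    also have "\<dots> = t * of_int (cartan E i j)"
      using s[of i] s[of j] norm[OF that(1)] signed[OF that] weight_b[OF that]
      unfolding cartan_def b_def by auto
    finally show ?thesis .
  qed
  with t norm s show ?thesis by (rule that)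
qed

lemma twice_functionals_realized_tree_type:
  fixes G :: "real^'n^'n"
  assumes GI: "integral_symmetric G" and KR: "K \<subseteq> roots G Zn" and type: "has_type G K m E"
    and two: "two_elementary m E" and tree: "ordered_tree m E" and "0 < m"
  shows "twice_functionals_realized G K"
  unfolding twice_functionals_realized_def
proof
  fix x :: "real^'n" assume x: "x \<in> Zn"
  obtain \<phi> where \<phi>: "bij_betw \<phi> {0..<m} K"
    and weight: "\<And>i j. i < m \<Longrightarrow> j < m \<Longrightarrow> i \<noteq> j \<Longrightarrow>
       cox_weight G (\<phi> i) (\<phi> j) = (if {i, j} \<in> E then 1 else 0)"
    using type unfolding has_type_def by blast
  have root: "\<phi> k \<in> roots G Zn" if "k < m" for k using bij_betw_apply[OF \<phi>] KR that by auto
  obtain t s where t: "t = 1 \<or> t = 3" and norm: "\<And>i. i < m \<Longrightarrow> bform G (\<phi> i) (\<phi> i) = 2 * t"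
    and s: "\<And>i. s i = 1 \<or> s i = -1"
    and gram: "\<And>i j. i < m \<Longrightarrow> j < m \<Longrightarrow>
       bform G (s i *\<^sub>R \<phi> i) (s j *\<^sub>R \<phi> j) = t * of_int (cartan E i j)"
    using tree_type_cartan_signs[OF GI KR \<phi> weight tree \<open>0 < m\<close>] by blast
  have s_Ints: "s i \<in> \<int>" for i using s[of i] by auto
  define \<beta> where "\<beta> k = s k * (bform G x (\<phi> k) / t)" for k
  have "\<beta> k \<in> \<int>" if "k < m" for k
    unfolding \<beta>_def using s_Ints root_bform_divisible[OF GI root[OF that] x norm[OF that] t]
    by (intro Ints_mult)
  then obtain c where c: "\<And>j. c j \<in> \<int>"
    and y: "\<And>k. k < m \<Longrightarrow> bform G (\<Sum>j<m. c j *\<^sub>R s j *\<^sub>R \<phi> j) (s k *\<^sub>R \<phi> k) = 2 * t * \<beta> k"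
    using two_elementary_realize[OF two gram] by blast
  show "\<exists>y\<in>lattice_span K. \<forall>w\<in>K. bform G y w = 2 * bform G x w"
  proof (intro bexI ballI)
    show "(\<Sum>j<m. c j *\<^sub>R s j *\<^sub>R \<phi> j) \<in> lattice_span K"
      using c s_Ints bij_betw_apply[OF \<phi>] bij_betw_finite[THEN iffD1, OF \<phi>]
      by (auto intro!: lattice_span_sum lattice_span_scale Ints_mult intro: lattice_span_base)
    fix w assume "w \<in> K"
    then obtain k where k: "k < m" "w = \<phi> k" using \<phi> unfolding bij_betw_def by auto
    have "t \<noteq> 0" "s k \<noteq> 0" using t s[of k] by auto
    then show "bform G (\<Sum>j<m. c j *\<^sub>R s j *\<^sub>R \<phi> j) w = 2 * bform G x w"
      using y[OF k(1)] unfolding k(2) \<beta>_def by (simp add: bform_simps)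
  qed
qed

lemma symp_cox_adj: "integral_symmetric G \<Longrightarrow> symp (cox_adj G J)"
  unfolding symp_def cox_adj_def cox_weight_def by (auto simp: bform_commute mult.commute)

lemma components_subset: "K \<in> components G J \<Longrightarrow> K \<subseteq> J"
  unfolding components_def by blast

lemma Union_components: "\<Union>(components G J) = J"
  unfolding components_def by blast

lemma components_disjoint:
  assumes "integral_symmetric G" "K \<in> components G J" "K' \<in> components G J" "v \<in> K" "v \<in> K'"
  shows "K = K'"
proof -
  have eq: "equivp (cox_adj G J)\<^sup>*\<^sup>*" using equivp_rtranclp[OF symp_cox_adj[OF assms(1)]] .
  obtain a a' where "K = {w \<in> J. (cox_adj G J)\<^sup>*\<^sup>* a w}" "K' = {w \<in> J. (cox_adj G J)\<^sup>*\<^sup>* a' w}"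
    using assms(2,3) unfolding components_def by blast
  with assms(4,5) show ?thesis using equivp_transp[OF eq] equivp_symp[OF eq] by blast
qed

lemma components_orthogonal:
  fixes G :: "real^'n^'n"
  assumes GI: "integral_symmetric G" and JR: "J \<subseteq> roots G Zn"
    and K: "K \<in> components G J" and K': "K' \<in> components G J" and "K \<noteq> K'"
    and v: "v \<in> K" and w: "w \<in> K'"
  shows "bform G v w = 0"
proof (rule ccontr)
  assume nonzero: "bform G v w \<noteq> 0"
  have "v \<noteq> w" using components_disjoint[OF GI K K' v] w \<open>K \<noteq> K'\<close> by blast
  moreover have "v \<in> J" "w \<in> J" using K K' v w components_subset by blast+
  moreover have "bform G v v \<noteq> 0" "bform G w w \<noteq> 0"
    using JR \<open>v \<in> J\<close> \<open>w \<in> J\<close> unfolding roots_def by auto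
  ultimately have "cox_adj G J v w" using nonzero unfolding cox_adj_def cox_weight_def by simp
  then have "w \<in> K"
    using K v unfolding components_def cox_adj_def by (auto intro: rtranclp.rtrancl_into_rtrancl)
  then show False using components_disjoint[OF GI K K' _ w] \<open>K \<noteq> K'\<close> by blast
qed

lemma twice_functionals_realized_Un:
  fixes G :: "real^'n^'n"
  assumes GI: "integral_symmetric G" and "finite (S \<union> T)"
    and orth: "\<And>v w. v \<in> S \<Longrightarrow> w \<in> T \<Longrightarrow> bform G v w = 0"
    and S: "twice_functionals_realized G S" and T: "twice_functionals_realized G T"
  shows "twice_functionals_realized G (S \<union> T)"
  unfolding twice_functionals_realized_def
proof
  fix x :: "real^'n" assume "x \<in> Zn"
  then obtain y z where y: "y \<in> lattice_span S" "\<forall>w\<in>S. bform G y w = 2 * bform G x w"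
    and z: "z \<in> lattice_span T" "\<forall>w\<in>T. bform G z w = 2 * bform G x w"
    using S T unfolding twice_functionals_realized_def by blast
  have "y + z \<in> lattice_span (S \<union> T)"
    using y(1) z(1) lattice_span_mono[OF _ \<open>finite (S \<union> T)\<close>] by (blast intro: lattice_span_add)
  moreover have "bform G (y + z) w = 2 * bform G x w" if "w \<in> S \<union> T" for w
  proof (cases "w \<in> S")
    case True
    have "bform G z w = 0"
      using bform_lattice_span_left[OF z(1)] orth True bform_commute[OF GI] by metis
    then show ?thesis using y(2) True by (simp add: bform_simps)
  next
    case False
    then have "bform G y w = 0" using bform_lattice_span_left[OF y(1)] orth that by blast
    then show ?thesis using z(2) False that by (simp add: bform_simps)
  qed
  ultimately show "\<exists>y\<in>lattice_span (S \<union> T). \<forall>w\<in>S \<union> T. bform G y w = 2 * bform G x w" by blast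
qed

lemma twice_functionals_realized_Union:
  assumes GI: "integral_symmetric G" and "finite \<K>" and "finite (\<Union>\<K>)"
    and realized: "\<And>K. K \<in> \<K> \<Longrightarrow> twice_functionals_realized G K"
    and orth: "\<And>K K' v w. K \<in> \<K> \<Longrightarrow> K' \<in> \<K> \<Longrightarrow> K \<noteq> K' \<Longrightarrow> v \<in> K \<Longrightarrow> w \<in> K' \<Longrightarrow>
       bform G v w = 0"
  shows "twice_functionals_realized G (\<Union>\<K>)"
  using \<open>finite \<K>\<close> \<open>finite (\<Union>\<K>)\<close> realized orth
proof (induction \<K> rule: finite_induct)
  case empty
  show ?case unfolding twice_functionals_realized_def using lattice_span_zero by auto
next
  case (insert K \<K>)
  have "twice_functionals_realized G (K \<union> \<Union>\<K>)"
  proof (rule twice_functionals_realized_Un[OF GI])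
    show "finite (K \<union> \<Union>\<K>)" using insert.prems(1) by simp
    show "bform G v w = 0" if "v \<in> K" "w \<in> \<Union>\<K>" for v w
      using that insert.hyps(2) insert.prems(3) by blast
    show "twice_functionals_realized G K" using insert.prems(2) by blast
    have "finite (\<Union>\<K>)" using insert.prems(1) by simp
    then show "twice_functionals_realized G (\<Union>\<K>)"
      using insert.prems(2,3) by (intro insert.IH) blast+
  qed
  then show ?case by simp
qed

lemma twice_functionals_realized_allowed:
  fixes G :: "real^'n^'n"
  assumes GI: "integral_symmetric G" and JR: "J \<subseteq> roots G Zn" and "finite J"
    and allowed: "\<forall>K\<in>components G J. allowed_type G K"
  shows "twice_functionals_realized G J"
proof -
  have "twice_functionals_realized G K" if K: "K \<in> components G J" for K
  proof -
    obtain m E where "has_type G K m E" "two_elementary m E" "ordered_tree m E" "0 < m"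
      using allowed_type_tree allowed K by blast
    moreover have "K \<subseteq> roots G Zn" using components_subset[OF K] JR by blast
    ultimately show ?thesis using twice_functionals_realized_tree_type[OF GI] by blast
  qed
  moreover have "finite (components G J)" using \<open>finite J\<close> unfolding components_def by simp
  ultimately have "twice_functionals_realized G (\<Union>(components G J))"
    using \<open>finite J\<close> components_orthogonal[OF GI JR]
    by (intro twice_functionals_realized_Union[OF GI]) (auto simp: Union_components)
  then show ?thesis by (simp add: Union_components)
qed

lemma lattice_aut_roots_iff:
  assumes "lattice_aut G M h" "r \<in> M"
  shows "h r \<in> roots G M \<longleftrightarrow> r \<in> roots G M"
proof -
  have hM: "h ` M = M" and iso: "\<And>x y. x \<in> M \<Longrightarrow> y \<in> M \<Longrightarrow> bform G (h x) (h y) = bform G x y"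
    using assms(1) unfolding lattice_aut_def by auto
  have "(\<forall>m\<in>M. bform G (h r) m / 3 \<in> \<int>) \<longleftrightarrow> (\<forall>m\<in>h ` M. bform G (h r) m / 3 \<in> \<int>)"
    using hM by simp
  also have "\<dots> \<longleftrightarrow> (\<forall>m\<in>M. bform G r m / 3 \<in> \<int>)" using iso assms(2) by simp
  finally have "(\<forall>m\<in>M. bform G (h r) m / 3 \<in> \<int>) \<longleftrightarrow> (\<forall>m\<in>M. bform G r m / 3 \<in> \<int>)" .
  then show ?thesis using assms(2) hM iso unfolding roots_def by auto
qed

lemma lattice_aut_roots:
  assumes aut: "lattice_aut G M h"
  shows "h ` roots G M = roots G M"
proof
  have hM: "h ` M = M" using aut unfolding lattice_aut_def by blast
  have roots_M: "roots G M \<subseteq> M" unfolding roots_def by blast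
  show "h ` roots G M \<subseteq> roots G M" using lattice_aut_roots_iff[OF aut] roots_M by blast
  show "roots G M \<subseteq> h ` roots G M"
  proof
    fix r assume r: "r \<in> roots G M"
    then obtain r' where "r' \<in> M" "r = h r'" using roots_M hM by blast
    then show "r \<in> h ` roots G M" using lattice_aut_roots_iff[OF aut] r by blast
  qed
qed

lemma lattice_aut_regular:
  assumes aut: "lattice_aut G M h"
  shows "h ` (Upsilon G M - mirrors G M) = Upsilon G M - mirrors G M"
proof -
  let ?S = "Upsilon G M - mirrors G M"
  have lin: "linear h" and hM: "h ` M = M" using aut unfolding lattice_aut_def by auto
  have iso: "bform G (h x) (h y) = bform G x y" if "x \<in> span M" "y \<in> span M" for x y
    using bform_isometry_span[OF lin _ that] aut unfolding lattice_aut_def by blast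
  have hspan: "h ` span M = span M" by (metis span_linear_image[OF lin] hM)
  have regular_iff: "h p \<in> ?S \<longleftrightarrow> p \<in> ?S" if p: "p \<in> span M" for p
  proof -
    have iso_r: "bform G (h p) (h r) = bform G p r" if "r \<in> roots G M" for r
      using iso[OF p span_base] that unfolding roots_def by blast
    have "(\<exists>r\<in>roots G M. bform G (h p) r = 0) \<longleftrightarrow> (\<exists>r\<in>h ` roots G M. bform G (h p) r = 0)"
      using lattice_aut_roots[OF aut] by simp
    also have "\<dots> \<longleftrightarrow> (\<exists>r\<in>roots G M. bform G p r = 0)" using iso_r by auto
    finally show ?thesis using p iso[OF p p] hspan unfolding Upsilon_def mirrors_def by auto
  qed
  have S_span: "?S \<subseteq> span M" unfolding Upsilon_def by blast
  show ?thesis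
  proof
    show "h ` ?S \<subseteq> ?S" using regular_iff S_span by blast
    show "?S \<subseteq> h ` ?S"
    proof
      fix q assume q: "q \<in> ?S"
      then obtain p where "p \<in> span M" "q = h p" using S_span hspan by blast
      then show "q \<in> h ` ?S" using regular_iff q by blast
    qed
  qed
qed

lemma lattice_aut_connected_component:
  assumes aut: "lattice_aut G M h" and "linear g" and gh: "\<And>x. g (h x) = x" and hg: "\<And>x. h (g x) = x"
    and p: "p \<in> Upsilon G M - mirrors G M"
  shows "h ` connected_component_set (Upsilon G M - mirrors G M) p =
    connected_component_set (Upsilon G M - mirrors G M) (h p)"
proof -
  let ?S = "Upsilon G M - mirrors G M"
  have hS: "h ` ?S = ?S" using lattice_aut_regular[OF aut] .
  have "g ` ?S = g ` h ` ?S" using hS by simp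
  also have "\<dots> = ?S" using gh by (simp add: image_image)
  finally have "g ` ?S = ?S" .
  moreover have "linear h" using aut unfolding lattice_aut_def by blast
  ultimately have "homeomorphism ?S ?S h g"
    using hS \<open>linear g\<close> gh hg unfolding homeomorphism_def
    by (simp add: linear_continuous_on linear_conv_bounded_linear[symmetric])
  from connected_component_set_homeomorphism[OF this p] show ?thesis by simp
qed

lemma elliptic_span_pos:
  assumes "elliptic G J" "z \<in> span J" "z \<noteq> 0"
  shows "bform G z z > 0"
proof -
  have "finite J" using assms(1) unfolding elliptic_def by blast
  then obtain c where z: "z = (\<Sum>v\<in>J. c v *\<^sub>R v)" using assms(2) span_finite by auto
  have "\<exists>v\<in>J. c v \<noteq> 0"
  proof (rule ccontr)
    assume "\<not> (\<exists>v\<in>J. c v \<noteq> 0)"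
    then have "z = 0" unfolding z by simp
    with assms(3) show False by simp
  qed
  then show ?thesis using assms(1) unfolding elliptic_def z by blast
qed

locale elliptic_splitting =
  fixes G :: "real^'n^'n" and J :: "(real^'n) set"
  assumes integral: "integral_symmetric G" and elliptic: "elliptic G J" and J_Zn: "J \<subseteq> Zn"
    and realized: "twice_functionals_realized G J"
begin

definition perp :: "(real^'n) set" where
  "perp = orth_complement G Zn (lattice_span J)"

lemma finite_J: "finite J"
  using elliptic unfolding elliptic_def by blast

lemma perp_eq: "perp = {x \<in> Zn. \<forall>v\<in>J. bform G x v = 0}"
proof -
  have "(\<forall>y\<in>lattice_span J. bform G x y = 0) \<longleftrightarrow> (\<forall>v\<in>J. bform G x v = 0)" for x
    using lattice_span_base[OF finite_J] bform_lattice_span_right[of _ J G x] by blast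
  then show ?thesis unfolding perp_def orth_complement_def by simp
qed

lemma perp_subset_Zn: "perp \<subseteq> Zn"
  unfolding perp_eq by blast

lemma perp_add: "x \<in> perp \<Longrightarrow> y \<in> perp \<Longrightarrow> x + y \<in> perp"
  and perp_diff: "x \<in> perp \<Longrightarrow> y \<in> perp \<Longrightarrow> x - y \<in> perp"
  and perp_scale: "a \<in> \<int> \<Longrightarrow> x \<in> perp \<Longrightarrow> a *\<^sub>R x \<in> perp"
  unfolding perp_eq by (simp_all add: Zn_add Zn_diff Zn_scale bform_simps)

lemma bform_span_perp_span_J:
  assumes "p \<in> span perp" "z \<in> span J"
  shows "bform G p z = 0"
proof (rule bform_span_orthogonal[OF _ assms])
  fix x y assume "x \<in> perp" "y \<in> J"
  then show "bform G x y = 0" unfolding perp_eq by blast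
qed

lemma span_perp_Zn: "x \<in> span perp \<Longrightarrow> x \<in> Zn \<Longrightarrow> x \<in> perp"
  using bform_span_perp_span_J[OF _ span_base] unfolding perp_eq by blast

lemma twice_minus_in_perp:
  assumes "x \<in> Zn"
  obtains y where "y \<in> lattice_span J" "2 *\<^sub>R x - y \<in> perp"
proof -
  obtain y where y: "y \<in> lattice_span J" "\<forall>w\<in>J. bform G y w = 2 * bform G x w"
    using realized assms unfolding twice_functionals_realized_def by blast
  have "2 *\<^sub>R x - y \<in> Zn"
    using assms y(1) lattice_span_subset_Zn[OF J_Zn] by (intro Zn_diff Zn_scale) auto
  moreover have "\<forall>v\<in>J. bform G (2 *\<^sub>R x - y) v = 0" using y(2) by (simp add: bform_simps)
  ultimately show ?thesis using that y(1) unfolding perp_eq by blast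
qed

lemma span_J_perp: "\<exists>u\<in>span J. p - u \<in> span perp"
proof -
  have "Zn \<subseteq> span (J \<union> perp)"
  proof
    fix x :: "real^'n" assume "x \<in> Zn"
    then obtain y where y: "y \<in> lattice_span J" "2 *\<^sub>R x - y \<in> perp" by (rule twice_minus_in_perp)
    have "y \<in> span (J \<union> perp)"
      using y(1) lattice_span_subset_span span_mono[of J "J \<union> perp"] by blast
    moreover have "2 *\<^sub>R x - y \<in> span (J \<union> perp)" using y(2) by (simp add: span_base)
    ultimately have "(1/2) *\<^sub>R y + (1/2) *\<^sub>R (2 *\<^sub>R x - y) \<in> span (J \<union> perp)"
      by (intro span_add span_scale)
    then show "x \<in> span (J \<union> perp)" by (simp add: algebra_simps)
  qed
  then have "span Zn \<subseteq> span (J \<union> perp)" by (simp add: span_minimal)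
  then have "p \<in> span (J \<union> perp)" using span_Zn by blast
  then obtain u w where "u \<in> span J" "w \<in> span perp" "p = u + w" unfolding span_Un by blast
  then show ?thesis by (intro bexI[of _ u]) auto
qed

lemma span_J_perp_unique:
  assumes "u \<in> span J" "u' \<in> span J" "p - u \<in> span perp" "p - u' \<in> span perp"
  shows "u = u'"
proof (rule ccontr)
  assume "u \<noteq> u'"
  have "u - u' \<in> span J" using assms(1,2) by (rule span_diff)
  moreover have "u - u' \<in> span perp" using span_diff[OF assms(4,3)] by (simp add: algebra_simps)
  ultimately have "bform G (u - u') (u - u') = 0" using bform_span_perp_span_J by blast
  then show False using elliptic_span_pos[OF elliptic \<open>u - u' \<in> span J\<close>] \<open>u \<noteq> u'\<close> by simp
qed

definition proj :: "real^'n \<Rightarrow> real^'n" where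
  "proj p = p - (SOME u. u \<in> span J \<and> p - u \<in> span perp)"

lemma proj_in_span_perp: "proj p \<in> span perp"
  and diff_proj_in_span_J: "p - proj p \<in> span J"
proof -
  have "\<exists>u. u \<in> span J \<and> p - u \<in> span perp" using span_J_perp by blast
  from someI_ex[OF this] show "proj p \<in> span perp" "p - proj p \<in> span J"
    unfolding proj_def by auto
qed

lemma proj_eqI:
  assumes "u \<in> span J" "p - u \<in> span perp"
  shows "proj p = p - u"
proof -
  have "p - (p - proj p) \<in> span perp" using proj_in_span_perp by simp
  then have "p - proj p = u" using span_J_perp_unique[OF diff_proj_in_span_J assms(1) _ assms(2)] by blast
  then show ?thesis by (simp add: algebra_simps)
qed

lemma linear_proj: "linear proj"
proof (rule linearI)
  fix x y
  have "(x - proj x) + (y - proj y) \<in> span J" by (intro span_add diff_proj_in_span_J)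
  moreover have "(x + y) - ((x - proj x) + (y - proj y)) \<in> span perp"
    using span_add[OF proj_in_span_perp proj_in_span_perp, of x y] by simp
  ultimately have "proj (x + y) = (x + y) - ((x - proj x) + (y - proj y))" by (rule proj_eqI)
  then show "proj (x + y) = proj x + proj y" by simp
next
  fix c :: real and x
  have "c *\<^sub>R (x - proj x) \<in> span J" by (intro span_scale diff_proj_in_span_J)
  moreover have "c *\<^sub>R x - c *\<^sub>R (x - proj x) \<in> span perp"
    using span_scale[OF proj_in_span_perp, of c x] by (simp add: algebra_simps)
  ultimately have "proj (c *\<^sub>R x) = c *\<^sub>R x - c *\<^sub>R (x - proj x)" by (rule proj_eqI)
  then show "proj (c *\<^sub>R x) = c *\<^sub>R proj x" by (simp add: algebra_simps)
qed

lemma roots_perp_subset: "roots G perp \<subseteq> roots G Zn"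
proof
  fix r assume r: "r \<in> roots G perp"
  then have "r \<in> perp" unfolding roots_def by blast
  then have rZ: "r \<in> Zn" and rJ: "\<forall>v\<in>J. bform G r v = 0" unfolding perp_eq by auto
  have "bform G r z / 3 \<in> \<int>" if six: "\<forall>m\<in>perp. bform G r m / 3 \<in> \<int>" and z: "z \<in> Zn" for z
  proof -
    obtain y where y: "y \<in> lattice_span J" "2 *\<^sub>R z - y \<in> perp" using twice_minus_in_perp[OF z] .
    have "bform G r y = 0" using bform_lattice_span_right[OF y(1)] rJ by blast
    then have "bform G r (2 *\<^sub>R z - y) = 2 * bform G r z" by (simp add: bform_simps)
    with six y(2) have "2 * bform G r z / 3 \<in> \<int>" by metis
    moreover have "bform G r z \<in> \<int>" using bform_Ints[OF integral rZ z] .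
    \<comment> \<open>2 is invertible modulo 3\<close>
    ultimately have "2 * (2 * bform G r z / 3) - bform G r z \<in> \<int>" by (intro Ints_diff Ints_mult) auto
    then show ?thesis by simp
  qed
  then show "r \<in> roots G Zn" using r rZ unfolding roots_def by auto
qed

lemma proj_regular:
  assumes p: "p \<in> Upsilon G Zn - mirrors G Zn"
  shows "proj p \<in> Upsilon G perp - mirrors G perp"
proof -
  define u where "u = p - proj p"
  have u: "u \<in> span J" unfolding u_def by (rule diff_proj_in_span_J)
  have orth: "bform G q u = 0" "bform G u q = 0" if "q \<in> span perp" for q
    using bform_span_perp_span_J[OF that u] bform_commute[OF integral] by auto
  have "bform G p p = bform G u u + bform G (proj p) (proj p)"
    using orth[OF proj_in_span_perp] unfolding u_def by (simp add: bform_simps)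
  moreover have "bform G u u \<ge> 0" using elliptic_span_pos[OF elliptic u] by (cases "u = 0") (auto simp: bform_simps)
  ultimately have "bform G (proj p) (proj p) < 0" using p unfolding Upsilon_def by simp
  moreover have "bform G (proj p) r \<noteq> 0" if r: "r \<in> roots G perp" for r
  proof -
    have "r \<in> span perp" using r unfolding roots_def by (blast intro: span_base)
    then have "bform G (proj p) r = bform G p r" using orth unfolding u_def by (simp add: bform_simps)
    then show ?thesis using p roots_perp_subset r unfolding mirrors_def by (auto simp: span_Zn)
  qed
  ultimately show ?thesis using proj_in_span_perp unfolding Upsilon_def mirrors_def by blast
qed

lemma lattice_aut_perp:
  assumes aut: "lattice_aut G Zn h" and hJ: "h ` J = J"
  shows "lattice_aut G perp h"
proof -
  have lin: "linear h" and hZ: "h ` Zn = Zn" using aut unfolding lattice_aut_def by auto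
  have iso: "bform G (h x) (h y) = bform G x y" for x y using lattice_aut_isometry[OF aut] .
  have perp_iff: "x \<in> perp \<longleftrightarrow> h x \<in> perp" if "x \<in> Zn" for x
  proof -
    have "(\<forall>v\<in>J. bform G (h x) v = 0) \<longleftrightarrow> (\<forall>v\<in>h ` J. bform G (h x) v = 0)" using hJ by simp
    also have "\<dots> \<longleftrightarrow> (\<forall>v\<in>J. bform G x v = 0)" using iso by simp
    finally show ?thesis using that hZ unfolding perp_eq by auto
  qed
  have "h ` perp = perp"
  proof
    show "h ` perp \<subseteq> perp" using perp_iff perp_subset_Zn by blast
    show "perp \<subseteq> h ` perp"
    proof
      fix y assume y: "y \<in> perp"
      then obtain x where "x \<in> Zn" "y = h x" using hZ perp_subset_Zn by blast
      then show "y \<in> h ` perp" using perp_iff y by blast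
    qed
  qed
  then show ?thesis using lin iso unfolding lattice_aut_def by blast
qed

lemma proj_commute:
  assumes aut: "lattice_aut G Zn h" and hJ: "h ` J = J"
  shows "proj (h p) = h (proj p)"
proof -
  have lin: "linear h" using aut unfolding lattice_aut_def by blast
  have "h ` span J = span J" by (metis span_linear_image[OF lin] hJ)
  then have "h (p - proj p) \<in> span J" using diff_proj_in_span_J by blast
  moreover have "h ` perp = perp" using lattice_aut_perp[OF aut hJ] unfolding lattice_aut_def by blast
  then have "h ` span perp = span perp" by (metis span_linear_image[OF lin])
  then have "h (proj p) \<in> span perp" using proj_in_span_perp[of p] by blast
  then have "h p - h (p - proj p) \<in> span perp" by (simp add: linear_diff[OF lin])
  ultimately have "proj (h p) = h p - h (p - proj p)" by (rule proj_eqI)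
  then show ?thesis by (simp add: linear_diff[OF lin])
qed

lemma invariant_chamber:
  assumes C: "chamber G Zn C" and aut: "lattice_aut G Zn f" and fJ: "f ` J = J" and fC: "f ` C = C"
  obtains C' where "chamber G perp C'" "f ` C' = C'"
proof -
  let ?S = "Upsilon G Zn - mirrors G Zn" and ?S' = "Upsilon G perp - mirrors G perp"
  obtain q where q: "q \<in> ?S" and C_eq: "C = connected_component_set ?S q"
    using C unfolding chamber_def by blast
  define C' where "C' = connected_component_set ?S' (proj q)"
  have proj_q: "proj q \<in> ?S'" using proj_regular[OF q] .
  have "q \<in> C" using q C_eq by simp
  have "proj ` C \<subseteq> C'"
    unfolding C'_def
  proof (rule connected_component_maximal)
    show "proj q \<in> proj ` C" using \<open>q \<in> C\<close> by simp
    show "connected (proj ` C)" unfolding C_eq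
      using linear_proj by (intro connected_continuous_image connected_connected_component)
        (simp add: linear_continuous_on linear_conv_bounded_linear[symmetric])
    have "C \<subseteq> ?S" unfolding C_eq by (rule connected_component_subset)
    then show "proj ` C \<subseteq> ?S'" using proj_regular by blast
  qed
  moreover have "f q \<in> C" using fC \<open>q \<in> C\<close> by blast
  ultimately have "proj (f q) \<in> C'" by blast
  obtain g where g: "linear g" "\<And>x. g (f x) = x" "\<And>x. f (g x) = x"
    using lattice_aut_Zn_invertible[OF aut] by blast
  have "f ` C' = connected_component_set ?S' (f (proj q))"
    unfolding C'_def by (rule lattice_aut_connected_component[OF lattice_aut_perp[OF aut fJ] g proj_q])
  also have "\<dots> = connected_component_set ?S' (proj (f q))" using proj_commute[OF aut fJ] by simp
  also have "\<dots> = C'"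
    using \<open>proj (f q) \<in> C'\<close> unfolding C'_def by (rule connected_component_eq)
  finally have "f ` C' = C'" .
  moreover have "chamber G perp C'" unfolding chamber_def C'_def using proj_q by blast
  ultimately show ?thesis by (intro that)
qed

lemma twice_bform_dual_perp_Ints:
  assumes x: "x \<in> dual_lattice G perp" and z: "z \<in> Zn"
  shows "2 * bform G x z \<in> \<int>"
proof -
  obtain y where y: "y \<in> lattice_span J" "2 *\<^sub>R z - y \<in> perp" using twice_minus_in_perp[OF z] .
  have "x \<in> span perp" using x unfolding dual_lattice_def by blast
  then have "bform G x y = 0" using bform_span_perp_span_J y(1) lattice_span_subset_span by blast
  then have "bform G x (2 *\<^sub>R z - y) = 2 * bform G x z" by (simp add: bform_simps)
  moreover have "bform G x (2 *\<^sub>R z - y) \<in> \<int>" using x y(2) unfolding dual_lattice_def by blast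
  ultimately show ?thesis by simp
qed

lemma Z3_reversing_perp:
  assumes aut: "lattice_aut G Zn f" and fJ: "f ` J = J" and rev: "Z3_reversing G Zn f"
  shows "Z3_reversing G perp f"
  unfolding Z3_reversing_def
proof
  fix x assume "x \<in> discr_part G perp 3"
  then have x: "x \<in> dual_lattice G perp" and "\<exists>k::nat. (3 ^ k) *\<^sub>R x \<in> perp"
    unfolding discr_part_def by auto
  then obtain k :: nat where xk: "(3 ^ k) *\<^sub>R x \<in> perp" by blast
  have lin: "linear f" using aut unfolding lattice_aut_def by blast
  have f_perp: "f ` perp = perp" using lattice_aut_perp[OF aut fJ] unfolding lattice_aut_def by blast
  then have f_span_perp: "f ` span perp = span perp" by (metis span_linear_image[OF lin])
  define \<xi> where "\<xi> = x - (3 ^ k) *\<^sub>R x"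
  have "x \<in> span perp" using x unfolding dual_lattice_def by blast
  then have \<xi>_span: "\<xi> \<in> span perp" unfolding \<xi>_def by (intro span_diff span_scale)
  have "odd ((3::nat) ^ k)" by simp
  then obtain j :: nat where j: "(3::nat) ^ k = 2 * j + 1" by (metis oddE)
  have "\<xi> \<in> discr_part G Zn 3"
    unfolding discr_part_def dual_lattice_def
  proof (intro CollectI conjI ballI)
    show "\<xi> \<in> span Zn" by (simp add: span_Zn)
  next
    fix z :: "real^'n" assume "z \<in> Zn"
    have "(3::real) ^ k = 2 * real j + 1" using arg_cong[OF j, of real] by simp
    then have "bform G \<xi> z = - real j * (2 * bform G x z)"
      unfolding \<xi>_def by (simp add: bform_simps algebra_simps)
    then show "bform G \<xi> z \<in> \<int>"
      using twice_bform_dual_perp_Ints[OF x \<open>z \<in> Zn\<close>] by simp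
  next
    have "(3 ^ k) *\<^sub>R \<xi> = (3 ^ k) *\<^sub>R x - (3 ^ k) *\<^sub>R ((3 ^ k) *\<^sub>R x)"
      unfolding \<xi>_def by (simp add: algebra_simps)
    also have "\<dots> \<in> perp" by (rule perp_diff[OF xk perp_scale[OF _ xk]]) simp
    finally have "(real 3 ^ k) *\<^sub>R \<xi> \<in> Zn" using perp_subset_Zn by auto
    then show "\<exists>k::nat. (real 3 ^ k) *\<^sub>R \<xi> \<in> Zn" by blast
  qed
  then have "f \<xi> + \<xi> \<in> Zn" using rev unfolding Z3_reversing_def by blast
  moreover have "f \<xi> \<in> span perp" using \<xi>_span f_span_perp by blast
  then have "f \<xi> + \<xi> \<in> span perp" using \<xi>_span by (rule span_add)
  ultimately have "f \<xi> + \<xi> \<in> perp" by (intro span_perp_Zn)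
  moreover have "f ((3 ^ k) *\<^sub>R x) \<in> perp" using xk f_perp by blast
  then have "f ((3 ^ k) *\<^sub>R x) + (3 ^ k) *\<^sub>R x \<in> perp" using xk by (rule perp_add)
  moreover have "f x + x = (f \<xi> + \<xi>) + (f ((3 ^ k) *\<^sub>R x) + (3 ^ k) *\<^sub>R x)"
    unfolding \<xi>_def by (simp add: linear_diff[OF lin] algebra_simps)
  ultimately show "f x + x \<in> perp" using perp_add by simp
qed

end

theorem lemma2p8:
  fixes G :: "real^'n^'n" and C J :: "(real^'n) set" and f :: "real^'n \<Rightarrow> real^'n"
  assumes "integral_symmetric G"
    and "even_lattice G Zn"
    and "hyperbolic G Zn"
    and "discr_condition G Zn"
    and "chamber G Zn C"
    and "J \<subseteq> wall_roots G Zn C"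
    and "elliptic G J"
    and "\<forall>K\<in>components G J. allowed_type G K"
    and "achiral G Zn"
    and "lattice_aut G Zn f" and "P_direct C f" and "Z3_reversing G Zn f"
    and "f ` wall_roots G Zn C = wall_roots G Zn C"
    and "f ` J = J"
  shows "achiral G (orth_complement G Zn (lattice_span J))"
proof -
  have JR: "J \<subseteq> roots G Zn" using assms(6) unfolding wall_roots_def by blast
  have "finite J" using assms(7) unfolding elliptic_def by blast
  then have realized: "twice_functionals_realized G J"
    using twice_functionals_realized_allowed[OF assms(1) JR _ assms(8)] by blast
  have "J \<subseteq> Zn" using JR unfolding roots_def by blast
  then interpret elliptic_splitting G J using assms(1,7) realized by unfold_locales
  have "f ` C = C" using assms(11) unfolding P_direct_def .
  then obtain C' where "chamber G perp C'" "f ` C' = C'"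
    using invariant_chamber[OF assms(5,10,14)] by blast
  moreover have "lattice_aut G perp f" using lattice_aut_perp[OF assms(10,14)] .
  moreover have "Z3_reversing G perp f" using Z3_reversing_perp[OF assms(10,14,12)] .
  ultimately show ?thesis unfolding achiral_def P_direct_def perp_def by blast
qed

end
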